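(* Let $p_{Z|XY}$ be a randomized function (not necessarily in normal form). (1) If the characteristic bipartite graph of $p_{XY}$ is connected, then every secure protocol $\Pi(p_{XY},p_{Z|XY})$ satisfies $I(X,Y,Z;M_{12})=0$. (2) If $p_{XY}$ has full support and there is no partition $\mathcal X=\mathcal X_1\cup\mathcal X_2$ into disjoint nonempty sets such that the sets $\mathcal Z_k=\{z:\exists x\in\mathcal X_k,y\in\mathcal Y,\ p(z|x,y)>0\}$, $k=1,2$, are disjoint, then every secure protocol $\Pi(p_{XY},p_{Z|XY})$ satisfies $I(X,Y,Z;M_{31})=0$. (3) If $p_{XY}$ has full support and there is no partition $\mathcal Y=\mathcal Y_1\cup\mathcal Y_2$ into disjoint nonempty sets such that the sets $\mathcal Z_k=\{z:\exists x\in\mathcal X,y\in\mathcal Y_k,\ p(z|x,y)>0\}$, $k=1,2$, are disjoint, then every secure protocol $\Pi(p_{XY},p_{Z|XY})$ satisfies $I(X,Y,Z;M_{23})=0$.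
   Context: Setting: $\mathcal X,\mathcal Y,\mathcal Z$ finite sets; Alice (party 1) holds $X\in\mathcal X$, Bob (party 2) holds $Y\in\mathcal Y$, $(X,Y)\sim p_{XY}$; Charlie (party 3) has no input and outputs $Z\in\mathcal Z$; a randomized function is a conditional distribution $p_{Z|XY}$. In a protocol the parties, each with private randomness, exchange messages over multiple rounds on three pairwise private links, each message a codeword of a prefix-free code determined by previous messages on that link; the protocol terminates with probability 1 and may depend on $p_{XY}$. $M_{12},M_{23},M_{31}$ are the final transcripts on the Alice–Bob, Bob–Charlie, Charlie–Alice links. A secure protocol $\Pi(p_{XY},p_{Z|XY})$ satisfies correctness (on inputs $x,y$ Charlie's output has distribution $p_{Z|X=x,Y=y}$) and privacy (Markov chains $(M_{12},M_{31})-X-(Y,Z)$, $(M_{12},M_{23})-Y-(X,Z)$, $(M_{23},M_{31})-Z-(X,Y)$). The characteristic bipartite graph of $p_{XY}$ has vertex set $\mathcal X\cup\mathcal Y$ with $x,y$ adjacent iff $p_{XY}(x,y)>0$. *)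

theory Defs
  imports "HOL-Probability.Probability"
begin

type_synonym msg = "bool list"
text \<open>History of a link: one entry per round in which the link is live; an entry is the pair
  of messages sent in the two directions in that round.
  Link 12: (Alice to Bob, Bob to Alice); link 23: (Bob to Charlie, Charlie to Bob);
  link 31: (Charlie to Alice, Alice to Charlie).\<close>
type_synonym hist = "(msg \<times> msg) list"

text \<open>A protocol is given by behavioural (randomised) next-message strategies: each party's
  messages in the next round are drawn from a distribution that depends only on its own view
  (own input and the histories of its two links); this is equivalent to using private
  randomness.
  Each message on a link is required to be a codeword of a prefix-free code that is
  determined by the previous messages on that link.\<close>
record ('x, 'y, 'z) protocol =
  alice   :: "'x \<Rightarrow> hist \<Rightarrow> hist \<Rightarrow> (msg \<times> msg \<times> bool) pmf"
    \<comment> \<open>input x, h12, h31 \<mapsto> (message to Bob, message to Charlie, halt?)\<close>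
  bob     :: "'y \<Rightarrow> hist \<Rightarrow> hist \<Rightarrow> (msg \<times> msg \<times> bool) pmf"
    \<comment> \<open>input y, h12, h23 \<mapsto> (message to Alice, message to Charlie, halt?)\<close>
  charlie :: "hist \<Rightarrow> hist \<Rightarrow> (msg \<times> msg \<times> 'z option) pmf"
    \<comment> \<open>h23, h31 \<mapsto> (message to Bob, message to Alice, output z and halt / continue)\<close>
  code12 :: "hist \<Rightarrow> msg set"
  code21 :: "hist \<Rightarrow> msg set"
  code23 :: "hist \<Rightarrow> msg set"
  code32 :: "hist \<Rightarrow> msg set"
  code31 :: "hist \<Rightarrow> msg set"
  code13 :: "hist \<Rightarrow> msg set"

definition prefix_free :: "msg set \<Rightarrow> bool" where
  "prefix_free C \<longleftrightarrow> (\<forall>u\<in>C. \<forall>v\<in>C. (\<exists>w. v = u @ w) \<longrightarrow> u = v)"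

definition valid_protocol :: "('x, 'y, 'z, 'e) protocol_scheme \<Rightarrow> bool" where
  "valid_protocol P \<longleftrightarrow>
     (\<forall>h. prefix_free (code12 P h) \<and> prefix_free (code21 P h) \<and> prefix_free (code23 P h) \<and>
          prefix_free (code32 P h) \<and> prefix_free (code31 P h) \<and> prefix_free (code13 P h)) \<and>
     (\<forall>x h12 h31 m1 m2 d. (m1, m2, d) \<in> set_pmf (alice P x h12 h31) \<longrightarrow>
          m1 \<in> code12 P h12 \<and> m2 \<in> code13 P h31) \<and>
     (\<forall>y h12 h23 m1 m2 d. (m1, m2, d) \<in> set_pmf (bob P y h12 h23) \<longrightarrow>
          m1 \<in> code21 P h12 \<and> m2 \<in> code23 P h23) \<and>
     (\<forall>h23 h31 m1 m2 o'. (m1, m2, o') \<in> set_pmf (charlie P h23 h31) \<longrightarrow>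
          m1 \<in> code32 P h23 \<and> m2 \<in> code31 P h31)"

text \<open>Global state: (Alice halted, Bob halted, Charlie's output if halted, h12, h23, h31).\<close>
type_synonym 'z pstate = "bool \<times> bool \<times> 'z option \<times> hist \<times> hist \<times> hist"

definition terminated :: "'z pstate \<Rightarrow> bool" where
  "terminated s = (case s of (ad, bd, co, _) \<Rightarrow> ad \<and> bd \<and> co \<noteq> None)"

definition step :: "('x, 'y, 'z, 'e) protocol_scheme \<Rightarrow> 'x \<Rightarrow> 'y \<Rightarrow> 'z pstate \<Rightarrow> 'z pstate pmf" where
  "step P x y s = (case s of (ad, bd, co, h12, h23, h31) \<Rightarrow>
     if terminated s then return_pmf s else
     do {
       (a12, a13, ad') \<leftarrow> (if ad then return_pmf ([], [], True) else alice P x h12 h31);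
       (b21, b23, bd') \<leftarrow> (if bd then return_pmf ([], [], True) else bob P y h12 h23);
       (c32, c31, co') \<leftarrow> (if co \<noteq> None then return_pmf ([], [], co) else charlie P h23 h31);
       return_pmf (ad', bd', co',
         (if ad \<and> bd then h12 else h12 @ [(a12, b21)]),
         (if bd \<and> co \<noteq> None then h23 else h23 @ [(b23, c32)]),
         (if co \<noteq> None \<and> ad then h31 else h31 @ [(c31, a13)]))
     })"

primrec run :: "('x, 'y, 'z, 'e) protocol_scheme \<Rightarrow> 'x \<Rightarrow> 'y \<Rightarrow> nat \<Rightarrow> 'z pstate pmf" where
  "run P x y 0 = return_pmf (False, False, None, [], [], [])"
| "run P x y (Suc n) = run P x y n \<bind> step P x y"

definition outcome :: "'z pstate \<Rightarrow> 'z \<times> hist \<times> hist \<times> hist" where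
  "outcome s = (case s of (_, _, co, h12, h23, h31) \<Rightarrow> (the co, h12, h23, h31))"

definition protocol_dist ::
  "('x, 'y, 'z, 'e) protocol_scheme \<Rightarrow> 'x \<Rightarrow> 'y \<Rightarrow> ('z \<times> hist \<times> hist \<times> hist) pmf \<Rightarrow> bool" where
  "protocol_dist P x y D \<longleftrightarrow>
     ((\<lambda>n. measure_pmf.prob (run P x y n) {s. terminated s}) \<longlonglongrightarrow> 1) \<and>
     (\<forall>o'. (\<lambda>n. measure_pmf.prob (run P x y n) {s. terminated s \<and> outcome s = o'})
              \<longlonglongrightarrow> pmf D o')"

definition joint ::
  "('x \<times> 'y) pmf \<Rightarrow> ('x \<Rightarrow> 'y \<Rightarrow> ('z \<times> hist \<times> hist \<times> hist) pmf)
     \<Rightarrow> ('x \<times> 'y \<times> 'z \<times> hist \<times> hist \<times> hist) pmf" where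
  "joint pXY D = pXY \<bind> (\<lambda>(x, y). map_pmf (\<lambda>(z, m). (x, y, z, m)) (D x y))"

definition markov_chain :: "'a pmf \<Rightarrow> ('a \<Rightarrow> 'b) \<Rightarrow> ('a \<Rightarrow> 'c) \<Rightarrow> ('a \<Rightarrow> 'd) \<Rightarrow> bool" where
  "markov_chain J f g h \<longleftrightarrow>
     (\<forall>a b c. measure_pmf.prob J {w. f w = a \<and> g w = b \<and> h w = c} * measure_pmf.prob J {w. g w = b}
        = measure_pmf.prob J {w. f w = a \<and> g w = b} * measure_pmf.prob J {w. g w = b \<and> h w = c})"

definition secure_protocol ::
  "('x \<times> 'y) pmf \<Rightarrow> ('x \<Rightarrow> 'y \<Rightarrow> 'z pmf) \<Rightarrow> ('x, 'y, 'z, 'e) protocol_scheme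
     \<Rightarrow> ('x \<Rightarrow> 'y \<Rightarrow> ('z \<times> hist \<times> hist \<times> hist) pmf) \<Rightarrow> bool" where
  "secure_protocol pXY W P D \<longleftrightarrow>
     valid_protocol P \<and>
     (\<forall>x y. (x, y) \<in> set_pmf pXY \<longrightarrow> protocol_dist P x y (D x y) \<and> map_pmf fst (D x y) = W x y) \<and>
     (let J = joint pXY D in
       markov_chain J (\<lambda>(x,y,z,m12,m23,m31). (m12, m31)) (\<lambda>(x,y,z,m12,m23,m31). x) (\<lambda>(x,y,z,m12,m23,m31). (y, z)) \<and>
       markov_chain J (\<lambda>(x,y,z,m12,m23,m31). (m12, m23)) (\<lambda>(x,y,z,m12,m23,m31). y) (\<lambda>(x,y,z,m12,m23,m31). (x, z)) \<and>
       markov_chain J (\<lambda>(x,y,z,m12,m23,m31). (m23, m31)) (\<lambda>(x,y,z,m12,m23,m31). z) (\<lambda>(x,y,z,m12,m23,m31). (x, y)))"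

text \<open>I(f;g) = 0 on the discrete distribution J, with the library's mutual information
  (KL divergence of the joint law from the product of marginals), additionally requiring that
  this KL divergence is a genuine (absolutely continuous, integrable) one, so that the value 0
  is not an artefact of the convention for non-integrable densities.\<close>
definition zero_mutual_information :: "'a pmf \<Rightarrow> ('a \<Rightarrow> 'b) \<Rightarrow> ('a \<Rightarrow> 'c) \<Rightarrow> bool" where
  "zero_mutual_information J f g \<longleftrightarrow>
     (let S = count_space UNIV; T = count_space UNIV;
          Pr = distr (measure_pmf J) S f \<Otimes>\<^sub>M distr (measure_pmf J) T g;
          Q = distr (measure_pmf J) (S \<Otimes>\<^sub>M T) (\<lambda>w. (f w, g w)) in
      absolutely_continuous Pr Q \<and> integrable Q (entropy_density 2 Pr Q) \<and>
      prob_space.mutual_information (measure_pmf J) 2 S T f g = 0)"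

definition char_graph_connected :: "('x \<times> 'y) pmf \<Rightarrow> bool" where
  "char_graph_connected pXY \<longleftrightarrow>
     (let E = {(Inl x, Inr y) | x y. pmf pXY (x, y) > 0} in
       \<forall>u v :: 'x + 'y. (u, v) \<in> (E \<union> E\<inverse>)\<^sup>*)"

definition full_support :: "('x \<times> 'y) pmf \<Rightarrow> bool" where
  "full_support pXY \<longleftrightarrow> (\<forall>x y. pmf pXY (x, y) > 0)"

definition no_X_partition :: "('x \<Rightarrow> 'y \<Rightarrow> 'z pmf) \<Rightarrow> bool" where
  "no_X_partition W \<longleftrightarrow> \<not> (\<exists>X1 X2. X1 \<union> X2 = UNIV \<and> X1 \<inter> X2 = {} \<and> X1 \<noteq> {} \<and> X2 \<noteq> {} \<and>
      {z. \<exists>x\<in>X1. \<exists>y. pmf (W x y) z > 0} \<inter> {z. \<exists>x\<in>X2. \<exists>y. pmf (W x y) z > 0} = {})"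

definition no_Y_partition :: "('x \<Rightarrow> 'y \<Rightarrow> 'z pmf) \<Rightarrow> bool" where
  "no_Y_partition W \<longleftrightarrow> \<not> (\<exists>Y1 Y2. Y1 \<union> Y2 = UNIV \<and> Y1 \<inter> Y2 = {} \<and> Y1 \<noteq> {} \<and> Y2 \<noteq> {} \<and>
      {z. \<exists>x. \<exists>y\<in>Y1. pmf (W x y) z > 0} \<inter> {z. \<exists>x. \<exists>y\<in>Y2. pmf (W x y) z > 0} = {})"

end

theory Submission
  imports Defs
begin

text \<open>Privacy makes the transcript M12 conditionally independent of (X, Y, Z) given X, and
  also given Y. On every atom (x, y, z) of positive probability the conditional law of M12
  given (X, Y, Z) = (x, y, z) is therefore both a function of x alone and a function of y
  alone, so it agrees on the two endpoints of every edge of the characteristic graph; along a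
  connected graph it is thus constant, i.e. M12 is independent of (X, Y, Z). The same argument
  with the pairs X, Z (for M31) and Y, Z (for M23) works when every input pair has positive
  probability: the conditional law is then constant along the bipartite graph joining x (resp. y)
  to the outputs z it can produce, which is connected exactly when no partition of the kind
  excluded in the hypothesis exists.\<close>

text \<open>P(M = m | G = g); it is 0 when P(G = g) = 0, and is only used for g of positive probability.\<close>
definition cond_prob :: "'a pmf \<Rightarrow> ('a \<Rightarrow> 'm) \<Rightarrow> 'm \<Rightarrow> ('a \<Rightarrow> 'g) \<Rightarrow> 'g \<Rightarrow> real" where
  "cond_prob J M m G g =
     measure_pmf.prob J {w. M w = m \<and> G w = g} / measure_pmf.prob J {w. G w = g}"

lemma prob_conj_eq_pmf_map:
  "measure_pmf.prob J {w. f w = u \<and> Q w} = pmf (map_pmf (\<lambda>w. (f w, Q w)) J) (u, True)"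
  by (simp add: pmf_map vimage_def)

lemma abs_summable_prob_conj:
  "Infinite_Set_Sum.abs_summable_on (\<lambda>u. measure_pmf.prob J {w. f w = u \<and> Q w}) A"
proof -
  let ?K = "map_pmf (\<lambda>w. (f w, Q w)) J"
  have "Infinite_Set_Sum.abs_summable_on (pmf ?K) ((\<lambda>u. (u, True)) ` A)" by blast
  then have "Infinite_Set_Sum.abs_summable_on (\<lambda>u. pmf ?K (u, True)) A"
    using abs_summable_on_reindex_iff[of "\<lambda>u. (u, True)" A "pmf ?K"] by (auto simp: inj_on_def)
  then show ?thesis by (simp add: prob_conj_eq_pmf_map)
qed

lemma prob_conj_eq_infsetsum:
  "measure_pmf.prob J {w. f w \<in> A \<and> Q w} = (\<Sum>\<^sub>a u\<in>A. measure_pmf.prob J {w. f w = u \<and> Q w})"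
proof -
  let ?K = "map_pmf (\<lambda>w. (f w, Q w)) J"
  have "measure_pmf.prob J {w. f w \<in> A \<and> Q w} = measure_pmf.prob ?K (A \<times> {True})"
    by (simp add: measure_map_pmf vimage_def)
  also have "\<dots> = infsetsum (pmf ?K) (A \<times> {True})"
    by (rule measure_pmf_conv_infsetsum)
  also have "\<dots> = (\<Sum>\<^sub>a u\<in>A. pmf ?K (u, True))"
    by (rule infsetsum_reindex_bij_betw[symmetric]) (auto simp: bij_betw_def inj_on_def)
  finally show ?thesis by (simp add: prob_conj_eq_pmf_map)
qed

lemma markov_chain_map_left:
  assumes mc: "markov_chain J f g h" and f': "\<And>w. f' w = \<phi> (f w)"
  shows "markov_chain J f' g h"
  unfolding markov_chain_def
proof (intro allI)
  fix a b c
  let ?P = "measure_pmf.prob J"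
  have "?P {w. f' w = a \<and> g w = b \<and> h w = c} * ?P {w. g w = b}
      = (\<Sum>\<^sub>a u\<in>\<phi> -` {a}. ?P {w. f w = u \<and> (g w = b \<and> h w = c)} * ?P {w. g w = b})"
    using prob_conj_eq_infsetsum[of J f "\<phi> -` {a}" "\<lambda>w. g w = b \<and> h w = c"]
    by (simp add: f' infsetsum_cmult_left abs_summable_prob_conj)
  also have "\<dots> = (\<Sum>\<^sub>a u\<in>\<phi> -` {a}. ?P {w. f w = u \<and> g w = b} * ?P {w. g w = b \<and> h w = c})"
    using mc unfolding markov_chain_def by simp
  also have "\<dots> = ?P {w. f' w = a \<and> g w = b} * ?P {w. g w = b \<and> h w = c}"
    using prob_conj_eq_infsetsum[of J f "\<phi> -` {a}" "\<lambda>w. g w = b"]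
    by (simp add: f' infsetsum_cmult_left abs_summable_prob_conj)
  finally show "?P {w. f' w = a \<and> g w = b \<and> h w = c} * ?P {w. g w = b}
      = ?P {w. f' w = a \<and> g w = b} * ?P {w. g w = b \<and> h w = c}" .
qed

lemma markov_chain_factor:
  assumes mc: "markov_chain J M G H"
    and event: "\<And>w. T w = t \<longleftrightarrow> G w = g \<and> H w = h"
    and pos: "measure_pmf.prob J {w. T w = t} > 0"
  shows "measure_pmf.prob J {w. T w = t \<and> M w = m}
       = cond_prob J M m G g * measure_pmf.prob J {w. T w = t}"
proof -
  let ?P = "measure_pmf.prob J"
  have "?P {w. T w = t} \<le> ?P {w. G w = g}"
    by (rule measure_pmf.finite_measure_mono) (auto simp: event)
  with pos have "?P {w. G w = g} > 0" by simp
  moreover have "?P {w. T w = t \<and> M w = m} * ?P {w. G w = g}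
      = ?P {w. M w = m \<and> G w = g} * ?P {w. T w = t}"
    using mc unfolding markov_chain_def event by (simp add: conj_ac)
  ultimately show ?thesis by (simp add: cond_prob_def field_simps)
qed

lemma pair_measure_distr_eq_distr_pair:
  fixes J :: "'a pmf" and f :: "'a \<Rightarrow> 'b::countable" and g :: "'a \<Rightarrow> 'c::countable"
  assumes indep: "\<And>a b. measure_pmf.prob J {w. f w = a \<and> g w = b}
      = measure_pmf.prob J {w. f w = a} * measure_pmf.prob J {w. g w = b}"
  shows "distr J (count_space UNIV) f \<Otimes>\<^sub>M distr J (count_space UNIV) g
       = distr J (count_space UNIV \<Otimes>\<^sub>M count_space UNIV) (\<lambda>w. (f w, g w))"
    (is "?F \<Otimes>\<^sub>M ?G = ?FG")
proof (rule measure_eqI_countable[where A=UNIV])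
  have count: "count_space (UNIV::'b set) \<Otimes>\<^sub>M count_space (UNIV::'c set) = count_space UNIV"
    by (simp add: pair_measure_countable)
  then show "sets (?F \<Otimes>\<^sub>M ?G) = Pow UNIV"
    by (metis sets_count_space sets_pair_measure_cong sets_distr)
  from count show "sets ?FG = Pow UNIV" by simp
  show "countable (UNIV :: ('b \<times> 'c) set)" by simp
  fix ab :: "'b \<times> 'c"
  obtain a b where ab: "ab = (a, b)" by (cases ab)
  interpret F: prob_space ?F by (rule measure_pmf.prob_space_distr) simp
  interpret G: prob_space ?G by (rule measure_pmf.prob_space_distr) simp
  have "emeasure (?F \<Otimes>\<^sub>M ?G) ({a} \<times> {b}) = emeasure ?F {a} * emeasure ?G {b}"
    by (rule G.emeasure_pair_measure_Times) auto
  also have "\<dots> = ennreal (measure_pmf.prob J {w. f w = a \<and> g w = b})"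
    by (simp add: emeasure_distr measure_pmf.emeasure_eq_measure vimage_def indep ennreal_mult)
  also have "\<dots> = emeasure ?FG {(a, b)}"
    using count by (simp add: emeasure_distr measure_pmf.emeasure_eq_measure vimage_def)
  finally show "emeasure (?F \<Otimes>\<^sub>M ?G) {ab} = emeasure ?FG {ab}"
    by (simp add: ab)
qed

lemma zero_mutual_information_if_indep:
  fixes J :: "'a pmf" and f :: "'a \<Rightarrow> 'b::countable" and g :: "'a \<Rightarrow> 'c::countable"
  assumes indep: "\<And>a b. measure_pmf.prob J {w. f w = a \<and> g w = b}
      = measure_pmf.prob J {w. f w = a} * measure_pmf.prob J {w. g w = b}"
  shows "zero_mutual_information J f g"
proof -
  define P where "P = distr J (count_space UNIV) f \<Otimes>\<^sub>M distr J (count_space UNIV) g"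
  have joint_eq: "distr J (count_space UNIV \<Otimes>\<^sub>M count_space UNIV) (\<lambda>w. (f w, g w)) = P"
    unfolding P_def by (rule pair_measure_distr_eq_distr_pair[OF indep, symmetric])
  interpret F: prob_space "distr J (count_space UNIV) f"
    by (rule measure_pmf.prob_space_distr) simp
  interpret G: prob_space "distr J (count_space UNIV) g"
    by (rule measure_pmf.prob_space_distr) simp
  interpret FG: pair_prob_space "distr J (count_space UNIV) f" "distr J (count_space UNIV) g" ..
  interpret P: information_space P 2 unfolding P_def by standard simp
  have "AE x in P. 1 = RN_deriv P P x"
    by (rule P.RN_deriv_unique) (auto simp: density_1)
  then have "AE x in P. entropy_density 2 P P x = 0"
    by (auto simp: entropy_density_def)
  then have "integrable P (entropy_density 2 P P)"
    by (subst integrable_cong_AE[where g="\<lambda>_. 0"]) auto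
  moreover have "prob_space.mutual_information (measure_pmf J) 2
      (count_space UNIV) (count_space UNIV) f g = 0"
    unfolding prob_space.mutual_information_def[OF measure_pmf.prob_space_axioms]
    by (simp add: joint_eq P_def[symmetric] P.KL_same_eq_0)
  ultimately show ?thesis
    unfolding zero_mutual_information_def Let_def joint_eq P_def[symmetric]
    by (simp add: absolutely_continuous_def)
qed

lemma zero_mutual_information_if_cond_law_const:
  fixes J :: "'a pmf" and T :: "'a \<Rightarrow> 't::finite" and M :: "'a \<Rightarrow> 'm::countable"
  assumes const: "\<And>t m. measure_pmf.prob J {w. T w = t} > 0 \<Longrightarrow>
      measure_pmf.prob J {w. T w = t \<and> M w = m} = c m * measure_pmf.prob J {w. T w = t}"
  shows "zero_mutual_information J T M"
proof (rule zero_mutual_information_if_indep)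
  let ?P = "measure_pmf.prob J"
  have law: "?P {w. T w = t \<and> M w = m} = c m * ?P {w. T w = t}" for t m
  proof (cases "?P {w. T w = t} > 0")
    case False
    then have "?P {w. T w = t} = 0" by (simp add: zero_less_measure_iff)
    moreover have "?P {w. T w = t \<and> M w = m} \<le> ?P {w. T w = t}"
      by (rule measure_pmf.finite_measure_mono) auto
    ultimately show ?thesis by (simp add: measure_le_0_iff)
  qed (rule const)
  fix t m
  have "?P {w. M w = m} = ?P {w. T w \<in> UNIV \<and> M w = m}" by simp
  also have "\<dots> = c m * (\<Sum>u\<in>UNIV. ?P {w. T w = u \<and> True})"
    by (subst prob_conj_eq_infsetsum) (simp add: law sum_distrib_left)
  also have "(\<Sum>u\<in>UNIV. ?P {w. T w = u \<and> True}) = ?P {w. T w \<in> UNIV \<and> True}"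
    by (simp only: prob_conj_eq_infsetsum infsetsum_finite finite)
  finally have "?P {w. M w = m} = c m" by simp
  then show "?P {w. T w = t \<and> M w = m} = ?P {w. T w = t} * ?P {w. M w = m}"
    by (simp add: law)
qed

lemma char_graph_connected_imp_const:
  fixes pXY :: "('x \<times> 'y) pmf"
  assumes conn: "char_graph_connected pXY"
    and edge: "\<And>x y. pmf pXY (x, y) > 0 \<Longrightarrow> \<alpha> x = \<beta> y"
  shows "\<alpha> x = \<alpha> x'"
proof -
  define E :: "('x + 'y) rel" where "E = {(Inl x, Inr y) | x y. pmf pXY (x, y) > 0}"
  have "case_sum \<alpha> \<beta> u = case_sum \<alpha> \<beta> v" if "(u, v) \<in> (E \<union> E\<inverse>)\<^sup>*" for u v
    using that by (induction rule: rtrancl_induct) (auto simp: E_def edge)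
  moreover have "(Inl x, Inl x') \<in> (E \<union> E\<inverse>)\<^sup>*"
    using conn unfolding char_graph_connected_def Let_def E_def by blast
  ultimately show ?thesis by fastforce
qed

lemma no_X_partition_imp_const:
  assumes np: "no_X_partition W"
    and edge: "\<And>x y z. pmf (W x y) z > 0 \<Longrightarrow> \<alpha> x = \<gamma> z"
  shows "\<alpha> x = \<alpha> x'"
proof (rule ccontr)
  assume ne: "\<alpha> x \<noteq> \<alpha> x'"
  define X1 where "X1 = {a. \<alpha> a = \<alpha> x}"
  have disjoint: "{z. \<exists>a\<in>X1. \<exists>b. pmf (W a b) z > 0} \<inter> {z. \<exists>a\<in>-X1. \<exists>b. pmf (W a b) z > 0} = {}"
    by (auto simp: X1_def dest!: edge)
  have "x \<in> X1" "x' \<notin> X1" using ne by (auto simp: X1_def)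
  with disjoint have "\<exists>X1 X2. X1 \<union> X2 = UNIV \<and> X1 \<inter> X2 = {} \<and> X1 \<noteq> {} \<and> X2 \<noteq> {} \<and>
      {z. \<exists>x\<in>X1. \<exists>y. pmf (W x y) z > 0} \<inter> {z. \<exists>x\<in>X2. \<exists>y. pmf (W x y) z > 0} = {}"
    by (intro exI[of _ X1] exI[of _ "-X1"]) auto
  with np show False unfolding no_X_partition_def by blast
qed

lemma no_Y_partition_imp_const:
  assumes np: "no_Y_partition W"
    and edge: "\<And>x y z. pmf (W x y) z > 0 \<Longrightarrow> \<beta> y = \<gamma> z"
  shows "\<beta> y = \<beta> y'"
proof (rule no_X_partition_imp_const[of "\<lambda>y x. W x y"])
  have "{z. \<exists>x. \<exists>y\<in>S. pmf (W x y) z > 0} = {z. \<exists>y\<in>S. \<exists>x. pmf (W x y) z > 0}" for S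
    by blast
  with np show "no_X_partition (\<lambda>y x. W x y)"
    unfolding no_Y_partition_def no_X_partition_def by simp
qed (rule edge)

lemma prob_joint_inputs_output:
  fixes D :: "'x \<Rightarrow> 'y \<Rightarrow> ('z \<times> hist \<times> hist \<times> hist) pmf"
  shows "measure_pmf.prob (joint pXY D) {w. (\<lambda>(x, y, z, m12, m23, m31). (x, y, z)) w = (x, y, z)}
     = pmf pXY (x, y) * pmf (map_pmf fst (D x y)) z"
proof -
  let ?T = "\<lambda>(x, y, z, m12, m23, m31). (x, y, z)"
  have inner: "pmf (map_pmf (\<lambda>z'. (a, b, z')) q) (x, y, z) = indicator {(x, y)} (a, b) * pmf q z"
    for a b q
  proof (cases "(a, b) = (x, y)")
    case True
    have "pmf (map_pmf (\<lambda>z'. (a, b, z')) q) ((\<lambda>z'. (a, b, z')) z) = pmf q z"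
      by (rule pmf_map_inj') (simp add: inj_on_def)
    with True show ?thesis by simp
  qed (auto simp: pmf_eq_0_set_pmf)
  have law: "map_pmf ?T (joint pXY D) = pXY \<bind> (\<lambda>(a, b). map_pmf (\<lambda>z'. (a, b, z')) (map_pmf fst (D a b)))"
    unfolding joint_def map_bind_pmf by (auto simp: map_pmf_comp split_beta intro!: bind_pmf_cong map_pmf_cong)
  have "measure_pmf.prob (joint pXY D) {w. ?T w = (x, y, z)} = pmf (map_pmf ?T (joint pXY D)) (x, y, z)"
    by (simp add: pmf_map vimage_def)
  also have "\<dots> = measure_pmf.expectation pXY (\<lambda>ab. indicator {(x, y)} ab * pmf (map_pmf fst (D (fst ab) (snd ab))) z)"
    unfolding law by (subst pmf_bind) (simp add: case_prod_beta inner)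
  also have "\<dots> = measure_pmf.expectation pXY (\<lambda>ab. indicator {(x, y)} ab * pmf (map_pmf fst (D x y)) z)"
    by (rule Bochner_Integration.integral_cong) (auto simp: indicator_def)
  also have "\<dots> = pmf pXY (x, y) * pmf (map_pmf fst (D x y)) z"
    by (simp add: measure_pmf_single)
  finally show ?thesis .
qed

lemma secure_protocol_correct:
  assumes "secure_protocol pXY W P D" and "pmf pXY (x, y) > 0"
  shows "map_pmf fst (D x y) = W x y"
  using assms unfolding secure_protocol_def by (simp add: set_pmf_iff)

lemma secure_protocol_prob_inputs_output_pos:
  assumes sec: "secure_protocol pXY W P D"
    and "pmf pXY (x, y) > 0" and "pmf (W x y) z > 0"
  shows "measure_pmf.prob (joint pXY D) {w. (\<lambda>(x, y, z, m12, m23, m31). (x, y, z)) w = (x, y, z)} > 0"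
  using assms by (simp add: prob_joint_inputs_output secure_protocol_correct[OF sec])

lemma secure_protocol_markov_chains:
  assumes "secure_protocol pXY W P D"
  shows "markov_chain (joint pXY D) (\<lambda>(x,y,z,m12,m23,m31). m12) (\<lambda>(x,y,z,m12,m23,m31). x) (\<lambda>(x,y,z,m12,m23,m31). (y, z))"
    and "markov_chain (joint pXY D) (\<lambda>(x,y,z,m12,m23,m31). m31) (\<lambda>(x,y,z,m12,m23,m31). x) (\<lambda>(x,y,z,m12,m23,m31). (y, z))"
    and "markov_chain (joint pXY D) (\<lambda>(x,y,z,m12,m23,m31). m12) (\<lambda>(x,y,z,m12,m23,m31). y) (\<lambda>(x,y,z,m12,m23,m31). (x, z))"
    and "markov_chain (joint pXY D) (\<lambda>(x,y,z,m12,m23,m31). m23) (\<lambda>(x,y,z,m12,m23,m31). y) (\<lambda>(x,y,z,m12,m23,m31). (x, z))"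
    and "markov_chain (joint pXY D) (\<lambda>(x,y,z,m12,m23,m31). m23) (\<lambda>(x,y,z,m12,m23,m31). z) (\<lambda>(x,y,z,m12,m23,m31). (x, y))"
    and "markov_chain (joint pXY D) (\<lambda>(x,y,z,m12,m23,m31). m31) (\<lambda>(x,y,z,m12,m23,m31). z) (\<lambda>(x,y,z,m12,m23,m31). (x, y))"
proof -
  from assms have
    x: "markov_chain (joint pXY D) (\<lambda>(x,y,z,m12,m23,m31). (m12, m31)) (\<lambda>(x,y,z,m12,m23,m31). x) (\<lambda>(x,y,z,m12,m23,m31). (y, z))" and
    y: "markov_chain (joint pXY D) (\<lambda>(x,y,z,m12,m23,m31). (m12, m23)) (\<lambda>(x,y,z,m12,m23,m31). y) (\<lambda>(x,y,z,m12,m23,m31). (x, z))" and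
    z: "markov_chain (joint pXY D) (\<lambda>(x,y,z,m12,m23,m31). (m23, m31)) (\<lambda>(x,y,z,m12,m23,m31). z) (\<lambda>(x,y,z,m12,m23,m31). (x, y))"
    unfolding secure_protocol_def Let_def by auto
  show "markov_chain (joint pXY D) (\<lambda>(x,y,z,m12,m23,m31). m12) (\<lambda>(x,y,z,m12,m23,m31). x) (\<lambda>(x,y,z,m12,m23,m31). (y, z))"
    by (rule markov_chain_map_left[OF x, where \<phi>=fst]) auto
  show "markov_chain (joint pXY D) (\<lambda>(x,y,z,m12,m23,m31). m31) (\<lambda>(x,y,z,m12,m23,m31). x) (\<lambda>(x,y,z,m12,m23,m31). (y, z))"
    by (rule markov_chain_map_left[OF x, where \<phi>=snd]) auto
  show "markov_chain (joint pXY D) (\<lambda>(x,y,z,m12,m23,m31). m12) (\<lambda>(x,y,z,m12,m23,m31). y) (\<lambda>(x,y,z,m12,m23,m31). (x, z))"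
    by (rule markov_chain_map_left[OF y, where \<phi>=fst]) auto
  show "markov_chain (joint pXY D) (\<lambda>(x,y,z,m12,m23,m31). m23) (\<lambda>(x,y,z,m12,m23,m31). y) (\<lambda>(x,y,z,m12,m23,m31). (x, z))"
    by (rule markov_chain_map_left[OF y, where \<phi>=snd]) auto
  show "markov_chain (joint pXY D) (\<lambda>(x,y,z,m12,m23,m31). m23) (\<lambda>(x,y,z,m12,m23,m31). z) (\<lambda>(x,y,z,m12,m23,m31). (x, y))"
    by (rule markov_chain_map_left[OF z, where \<phi>=fst]) auto
  show "markov_chain (joint pXY D) (\<lambda>(x,y,z,m12,m23,m31). m31) (\<lambda>(x,y,z,m12,m23,m31). z) (\<lambda>(x,y,z,m12,m23,m31). (x, y))"
    by (rule markov_chain_map_left[OF z, where \<phi>=snd]) auto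
qed

lemma zero_mutual_information_M12_if_char_graph_connected:
  fixes pXY :: "('x::finite \<times> 'y::finite) pmf" and W :: "'x \<Rightarrow> 'y \<Rightarrow> ('z::finite) pmf"
  assumes conn: "char_graph_connected pXY" and sec: "secure_protocol pXY W P D"
  shows "zero_mutual_information (joint pXY D)
           (\<lambda>(x,y,z,m12,m23,m31). (x, y, z)) (\<lambda>(x,y,z,m12,m23,m31). m12)"
proof -
  let ?J = "joint pXY D" and ?T = "\<lambda>(x,y,z,m12,m23,m31). (x, y, z)"
    and ?M = "\<lambda>(x,y,z,m12,m23,m31). m12"
  define \<alpha> where "\<alpha> m x = cond_prob ?J ?M m (\<lambda>(x,y,z,m12,m23,m31). x) x" for m x
  define \<beta> where "\<beta> m y = cond_prob ?J ?M m (\<lambda>(x,y,z,m12,m23,m31). y) y" for m y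
  note mc = secure_protocol_markov_chains[OF sec]
  have law_x: "measure_pmf.prob ?J {w. ?T w = (x, y, z) \<and> ?M w = m} = \<alpha> m x * measure_pmf.prob ?J {w. ?T w = (x, y, z)}"
    and law_y: "measure_pmf.prob ?J {w. ?T w = (x, y, z) \<and> ?M w = m} = \<beta> m y * measure_pmf.prob ?J {w. ?T w = (x, y, z)}"
    if pos: "measure_pmf.prob ?J {w. ?T w = (x, y, z)} > 0" for x y z m
    unfolding \<alpha>_def \<beta>_def
    by (rule markov_chain_factor[OF mc(1) _ pos] markov_chain_factor[OF mc(3) _ pos]; auto)+
  have edge: "\<alpha> m x = \<beta> m y" if "pmf pXY (x, y) > 0" for m x y
  proof -
    obtain z where "z \<in> set_pmf (W x y)" using set_pmf_not_empty by fast
    then have "measure_pmf.prob ?J {w. ?T w = (x, y, z)} > 0"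
      using secure_protocol_prob_inputs_output_pos[OF sec that] by (simp add: pmf_positive)
    with law_x[OF this, of m] law_y[OF this, of m] show ?thesis by simp
  qed
  show ?thesis
  proof (rule zero_mutual_information_if_cond_law_const)
    fix t :: "'x \<times> 'y \<times> 'z" and m
    obtain x y z where t: "t = (x, y, z)" by (cases t)
    assume "measure_pmf.prob ?J {w. ?T w = t} > 0"
    then show "measure_pmf.prob ?J {w. ?T w = t \<and> ?M w = m} = \<alpha> m undefined * measure_pmf.prob ?J {w. ?T w = t}"
      using law_x char_graph_connected_imp_const[OF conn edge] by (simp add: t)
  qed
qed

lemma zero_mutual_information_M31_if_no_X_partition:
  fixes pXY :: "('x::finite \<times> 'y::finite) pmf" and W :: "'x \<Rightarrow> 'y \<Rightarrow> ('z::finite) pmf"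
  assumes full: "full_support pXY" and np: "no_X_partition W" and sec: "secure_protocol pXY W P D"
  shows "zero_mutual_information (joint pXY D)
           (\<lambda>(x,y,z,m12,m23,m31). (x, y, z)) (\<lambda>(x,y,z,m12,m23,m31). m31)"
proof -
  let ?J = "joint pXY D" and ?T = "\<lambda>(x,y,z,m12,m23,m31). (x, y, z)"
    and ?M = "\<lambda>(x,y,z,m12,m23,m31). m31"
  define \<alpha> where "\<alpha> m x = cond_prob ?J ?M m (\<lambda>(x,y,z,m12,m23,m31). x) x" for m x
  define \<gamma> where "\<gamma> m z = cond_prob ?J ?M m (\<lambda>(x,y,z,m12,m23,m31). z) z" for m z
  note mc = secure_protocol_markov_chains[OF sec]
  have law_x: "measure_pmf.prob ?J {w. ?T w = (x, y, z) \<and> ?M w = m} = \<alpha> m x * measure_pmf.prob ?J {w. ?T w = (x, y, z)}"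
    and law_z: "measure_pmf.prob ?J {w. ?T w = (x, y, z) \<and> ?M w = m} = \<gamma> m z * measure_pmf.prob ?J {w. ?T w = (x, y, z)}"
    if pos: "measure_pmf.prob ?J {w. ?T w = (x, y, z)} > 0" for x y z m
    unfolding \<alpha>_def \<gamma>_def
    by (rule markov_chain_factor[OF mc(2) _ pos] markov_chain_factor[OF mc(6) _ pos]; auto)+
  have edge: "\<alpha> m x = \<gamma> m z" if "pmf (W x y) z > 0" for m x y z
  proof -
    have "measure_pmf.prob ?J {w. ?T w = (x, y, z)} > 0"
      using secure_protocol_prob_inputs_output_pos[OF sec _ that] full
      by (simp add: full_support_def)
    with law_x[OF this, of m] law_z[OF this, of m] show ?thesis by simp
  qed
  show ?thesis
  proof (rule zero_mutual_information_if_cond_law_const)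
    fix t :: "'x \<times> 'y \<times> 'z" and m
    obtain x y z where t: "t = (x, y, z)" by (cases t)
    assume "measure_pmf.prob ?J {w. ?T w = t} > 0"
    then show "measure_pmf.prob ?J {w. ?T w = t \<and> ?M w = m} = \<alpha> m undefined * measure_pmf.prob ?J {w. ?T w = t}"
      using law_x no_X_partition_imp_const[OF np edge] by (simp add: t)
  qed
qed

lemma zero_mutual_information_M23_if_no_Y_partition:
  fixes pXY :: "('x::finite \<times> 'y::finite) pmf" and W :: "'x \<Rightarrow> 'y \<Rightarrow> ('z::finite) pmf"
  assumes full: "full_support pXY" and np: "no_Y_partition W" and sec: "secure_protocol pXY W P D"
  shows "zero_mutual_information (joint pXY D)
           (\<lambda>(x,y,z,m12,m23,m31). (x, y, z)) (\<lambda>(x,y,z,m12,m23,m31). m23)"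
proof -
  let ?J = "joint pXY D" and ?T = "\<lambda>(x,y,z,m12,m23,m31). (x, y, z)"
    and ?M = "\<lambda>(x,y,z,m12,m23,m31). m23"
  define \<beta> where "\<beta> m y = cond_prob ?J ?M m (\<lambda>(x,y,z,m12,m23,m31). y) y" for m y
  define \<gamma> where "\<gamma> m z = cond_prob ?J ?M m (\<lambda>(x,y,z,m12,m23,m31). z) z" for m z
  note mc = secure_protocol_markov_chains[OF sec]
  have law_y: "measure_pmf.prob ?J {w. ?T w = (x, y, z) \<and> ?M w = m} = \<beta> m y * measure_pmf.prob ?J {w. ?T w = (x, y, z)}"
    and law_z: "measure_pmf.prob ?J {w. ?T w = (x, y, z) \<and> ?M w = m} = \<gamma> m z * measure_pmf.prob ?J {w. ?T w = (x, y, z)}"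
    if pos: "measure_pmf.prob ?J {w. ?T w = (x, y, z)} > 0" for x y z m
    unfolding \<beta>_def \<gamma>_def
    by (rule markov_chain_factor[OF mc(4) _ pos] markov_chain_factor[OF mc(5) _ pos]; auto)+
  have edge: "\<beta> m y = \<gamma> m z" if "pmf (W x y) z > 0" for m x y z
  proof -
    have "measure_pmf.prob ?J {w. ?T w = (x, y, z)} > 0"
      using secure_protocol_prob_inputs_output_pos[OF sec _ that] full
      by (simp add: full_support_def)
    with law_y[OF this, of m] law_z[OF this, of m] show ?thesis by simp
  qed
  show ?thesis
  proof (rule zero_mutual_information_if_cond_law_const)
    fix t :: "'x \<times> 'y \<times> 'z" and m
    obtain x y z where t: "t = (x, y, z)" by (cases t)
    assume "measure_pmf.prob ?J {w. ?T w = t} > 0"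
    then show "measure_pmf.prob ?J {w. ?T w = t \<and> ?M w = m} = \<beta> m undefined * measure_pmf.prob ?J {w. ?T w = t}"
      using law_y no_Y_partition_imp_const[OF np edge] by (simp add: t)
  qed
qed

theorem lemma3:
  fixes pXY :: "('x::finite \<times> 'y::finite) pmf"
    and W :: "'x \<Rightarrow> 'y \<Rightarrow> ('z::finite) pmf"
  shows
   "(char_graph_connected pXY \<longrightarrow>
       (\<forall>(P :: ('x, 'y, 'z) protocol) D. secure_protocol pXY W P D \<longrightarrow>
          zero_mutual_information (joint pXY D)
            (\<lambda>(x,y,z,m12,m23,m31). (x, y, z)) (\<lambda>(x,y,z,m12,m23,m31). m12))) \<and>
    (full_support pXY \<and> no_X_partition W \<longrightarrow>
       (\<forall>(P :: ('x, 'y, 'z) protocol) D. secure_protocol pXY W P D \<longrightarrow>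
          zero_mutual_information (joint pXY D)
            (\<lambda>(x,y,z,m12,m23,m31). (x, y, z)) (\<lambda>(x,y,z,m12,m23,m31). m31))) \<and>
    (full_support pXY \<and> no_Y_partition W \<longrightarrow>
       (\<forall>(P :: ('x, 'y, 'z) protocol) D. secure_protocol pXY W P D \<longrightarrow>
          zero_mutual_information (joint pXY D)
            (\<lambda>(x,y,z,m12,m23,m31). (x, y, z)) (\<lambda>(x,y,z,m12,m23,m31). m23)))"
  using zero_mutual_information_M12_if_char_graph_connected[of pXY W]
    zero_mutual_information_M31_if_no_X_partition[of pXY W]
    zero_mutual_information_M23_if_no_Y_partition[of pXY W]
  by blast

end
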